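(* For all $\tau>0$ and all $\lambda,\lambda'\in\mathbb{R}^m_+$, $$\max_{s\in\mathcal S}\bigl\|\pi^*_{\tau,\lambda}(\cdot\mid s)-\pi^*_{\tau,\lambda'}(\cdot\mid s)\bigr\|_1\le\frac{R_{\max}}{(1-\gamma)\tau}\|\lambda-\lambda'\|_2.$$
   Context: Finite MDP with state space $\mathcal S$, action space $\mathcal A$, transition kernel $\mathrm P$, discount $\gamma\in(0,1)$, positive finite rewards $r_0,r_1,\dots,r_m:\mathcal S\times\mathcal A\to(0,\infty)$, $r_{i,\max}=\max_{s,a}r_i(s,a)$, $R_{\max}=\sqrt{\sum_{i=1}^mr_{i,\max}^2}$. For $\lambda\in\mathbb{R}^m_+$ let $r_\lambda=r_0+\sum_{i=1}^m\lambda_ir_i$. For $\tau>0$ and a stationary policy $\pi$, the entropy-regularized value is $V^\pi_{\tau,\lambda}(s)=\mathbb{E}[\sum_{t\ge0}\gamma^t(r_\lambda(s_t,a_t)-\tau\log\pi(a_t\mid s_t))\mid s_0=s]$ with $a_t\sim\pi(\cdot\mid s_t)$, $s_{t+1}\sim\mathrm P(\cdot\mid s_t,a_t)$. There is a unique stationary policy maximizing $V^\pi_{\tau,\lambda}(s)$ simultaneously for all $s\in\mathcal S$; it is denoted $\pi^*_{\tau,\lambda}$ (the optimal policy of the entropy-regularized MDP with reward $r_\lambda$). *)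

theory Defs
  imports "HOL-Analysis.Analysis"
begin

text \<open>Finite MDP: states 's, actions 'a (finite types). A stationary policy is a
  map p :: 's => 'a => real with p s a = p(a|s). Transition kernel
  P s a s' = P(s'|s,a). Rewards r 0, ..., r m.\<close>

definition is_policy :: "('s::finite \<Rightarrow> 'a::finite \<Rightarrow> real) \<Rightarrow> bool" where
  "is_policy p \<longleftrightarrow> (\<forall>s. (\<forall>a. 0 \<le> p s a) \<and> (\<Sum>a\<in>UNIV. p s a) = 1)"

definition is_kernel :: "('s::finite \<Rightarrow> 'a::finite \<Rightarrow> 's \<Rightarrow> real) \<Rightarrow> bool" where
  "is_kernel P \<longleftrightarrow> (\<forall>s a. (\<forall>s'. 0 \<le> P s a s') \<and> (\<Sum>s'\<in>UNIV. P s a s') = 1)"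

definition r_lam :: "nat \<Rightarrow> (nat \<Rightarrow> 's \<Rightarrow> 'a \<Rightarrow> real) \<Rightarrow> (nat \<Rightarrow> real) \<Rightarrow> 's \<Rightarrow> 'a \<Rightarrow> real" where
  "r_lam m r lam s a = r 0 s a + (\<Sum>i=1..m. lam i * r i s a)"

definition P_pi :: "('s::finite \<Rightarrow> 'a::finite \<Rightarrow> 's \<Rightarrow> real) \<Rightarrow> ('s \<Rightarrow> 'a \<Rightarrow> real) \<Rightarrow> 's \<Rightarrow> 's \<Rightarrow> real" where
  "P_pi P p s s' = (\<Sum>a\<in>UNIV. p s a * P s a s')"

fun state_dist :: "('s::finite \<Rightarrow> 'a::finite \<Rightarrow> 's \<Rightarrow> real) \<Rightarrow> ('s \<Rightarrow> 'a \<Rightarrow> real) \<Rightarrow> nat \<Rightarrow> 's \<Rightarrow> 's \<Rightarrow> real" where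
  "state_dist P p 0 s s' = (if s = s' then 1 else 0)"
| "state_dist P p (Suc n) s s' = (\<Sum>s''\<in>UNIV. state_dist P p n s s'' * P_pi P p s'' s')"

text \<open>expected one-step regularized reward E_{a~p(.|s)}[r_lambda(s,a) - tau log p(a|s)]
  (terms with p(a|s) = 0 contribute 0)\<close>
definition reg_reward :: "nat \<Rightarrow> (nat \<Rightarrow> 's \<Rightarrow> 'a::finite \<Rightarrow> real) \<Rightarrow> (nat \<Rightarrow> real) \<Rightarrow> real
    \<Rightarrow> ('s \<Rightarrow> 'a \<Rightarrow> real) \<Rightarrow> 's \<Rightarrow> real" where
  "reg_reward m r lam tau p s = (\<Sum>a\<in>UNIV. p s a * (r_lam m r lam s a - tau * ln (p s a)))"

definition V_reg :: "('s::finite \<Rightarrow> 'a::finite \<Rightarrow> 's \<Rightarrow> real) \<Rightarrow> real \<Rightarrow> nat \<Rightarrow> (nat \<Rightarrow> 's \<Rightarrow> 'a \<Rightarrow> real)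
    \<Rightarrow> real \<Rightarrow> (nat \<Rightarrow> real) \<Rightarrow> ('s \<Rightarrow> 'a \<Rightarrow> real) \<Rightarrow> 's \<Rightarrow> real" where
  "V_reg P gamma m r tau lam p s =
     (\<Sum>t. gamma ^ t * (\<Sum>s'\<in>UNIV. state_dist P p t s s' * reg_reward m r lam tau p s'))"

definition is_opt_reg_policy :: "('s::finite \<Rightarrow> 'a::finite \<Rightarrow> 's \<Rightarrow> real) \<Rightarrow> real \<Rightarrow> nat
    \<Rightarrow> (nat \<Rightarrow> 's \<Rightarrow> 'a \<Rightarrow> real) \<Rightarrow> real \<Rightarrow> (nat \<Rightarrow> real) \<Rightarrow> ('s \<Rightarrow> 'a \<Rightarrow> real) \<Rightarrow> bool" where
  "is_opt_reg_policy P gamma m r tau lam p \<longleftrightarrow>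
     is_policy p \<and> (\<forall>q. is_policy q \<longrightarrow> (\<forall>s. V_reg P gamma m r tau lam q s \<le> V_reg P gamma m r tau lam p s))"

definition r_max :: "(nat \<Rightarrow> 's::finite \<Rightarrow> 'a::finite \<Rightarrow> real) \<Rightarrow> nat \<Rightarrow> real" where
  "r_max r i = Max (range (\<lambda>(s, a). r i s a))"

definition R_max :: "nat \<Rightarrow> (nat \<Rightarrow> 's::finite \<Rightarrow> 'a::finite \<Rightarrow> real) \<Rightarrow> real" where
  "R_max m r = sqrt (\<Sum>i=1..m. (r_max r i)\<^sup>2)"

definition lam_dist2 :: "nat \<Rightarrow> (nat \<Rightarrow> real) \<Rightarrow> (nat \<Rightarrow> real) \<Rightarrow> real" where
  "lam_dist2 m lam lam' = sqrt (\<Sum>i=1..m. (lam i - lam' i)\<^sup>2)"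

end

theory Submission
  imports Defs
begin

text \<open>The optimal entropy-regularised policy is the softmax of its soft Q-function divided by
  \<open>tau\<close> (Gibbs' variational principle). The maximum of the regularised one-step objective is
  1-Lipschitz in the sup norm of Q, so comparing the fixed-point equations for \<open>lambda\<close> and
  \<open>lambda'\<close> bounds the sup distance of the two Q-functions by
  \<open>\<parallel>r_lambda - r_lambda'\<parallel>\<^sub>\<infinity> / (1 - gamma) \<le> R_max \<parallel>lambda - lambda'\<parallel>\<^sub>2 / (1 - gamma)\<close>.
  Finally softmax is 1-Lipschitz from the sup norm to the \<open>l\<^sub>1\<close> norm: along a segment, the
  \<open>l\<^sub>1\<close> norm of its derivative is the mean absolute deviation of the direction under the
  softmax distribution.\<close>

definition prob_vec :: "('a::finite \<Rightarrow> real) \<Rightarrow> bool" where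
  "prob_vec w \<longleftrightarrow> (\<forall>a. 0 \<le> w a) \<and> (\<Sum>a\<in>UNIV. w a) = 1"

lemma is_policy_iff_prob_vec: "is_policy p \<longleftrightarrow> (\<forall>s. prob_vec (p s))"
  unfolding is_policy_def prob_vec_def by blast

lemma is_kernel_iff_prob_vec: "is_kernel P \<longleftrightarrow> (\<forall>s a. prob_vec (P s a))"
  unfolding is_kernel_def prob_vec_def by blast

lemma prob_vec_nonneg: "prob_vec w \<Longrightarrow> 0 \<le> w a"
  unfolding prob_vec_def by blast

lemma prob_vec_sum_mult_const: "prob_vec w \<Longrightarrow> (\<Sum>a\<in>UNIV. w a * c) = c"
  unfolding prob_vec_def by (simp flip: sum_distrib_right)

lemma prob_vec_mean_le:
  assumes "prob_vec w" and "\<And>a. f a \<le> d"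
  shows "(\<Sum>a\<in>UNIV. w a * f a) \<le> d"
proof -
  have "(\<Sum>a\<in>UNIV. w a * f a) \<le> (\<Sum>a\<in>UNIV. w a * d)"
    by (intro sum_mono mult_left_mono assms prob_vec_nonneg)
  then show ?thesis using prob_vec_sum_mult_const[OF assms(1)] by simp
qed

lemma prob_vec_abs_mean_le:
  assumes "prob_vec w" and "\<And>a. \<bar>f a\<bar> \<le> d"
  shows "\<bar>\<Sum>a\<in>UNIV. w a * f a\<bar> \<le> d"
proof -
  have "\<bar>\<Sum>a\<in>UNIV. w a * f a\<bar> \<le> (\<Sum>a\<in>UNIV. w a * \<bar>f a\<bar>)"
    using sum_abs[of "\<lambda>a. w a * f a"] by (simp add: abs_mult prob_vec_nonneg[OF assms(1)])
  also have "\<dots> \<le> d" by (rule prob_vec_mean_le[OF assms])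
  finally show ?thesis .
qed

lemma prob_vec_mean_sq_le:
  assumes "prob_vec p"
  shows "(\<Sum>a\<in>UNIV. p a * f a)\<^sup>2 \<le> (\<Sum>a\<in>UNIV. p a * (f a)\<^sup>2)"
proof -
  have p0: "0 \<le> p a" for a by (rule prob_vec_nonneg[OF assms])
  have "(\<Sum>a\<in>UNIV. sqrt (p a) * (sqrt (p a) * f a))\<^sup>2
      \<le> (\<Sum>a\<in>UNIV. (sqrt (p a))\<^sup>2) * (\<Sum>a\<in>UNIV. (sqrt (p a) * f a)\<^sup>2)"
    by (rule Cauchy_Schwarz_ineq_sum)
  then show ?thesis
    using assms p0 by (simp add: prob_vec_def power_mult_distrib flip: mult.assoc)
qed

lemma prob_vec_mean_abs_deviation_le:
  assumes p: "prob_vec p" and v: "\<And>a. \<bar>v a\<bar> \<le> d"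
  shows "(\<Sum>a\<in>UNIV. p a * \<bar>v a - (\<Sum>b\<in>UNIV. p b * v b)\<bar>) \<le> d"
proof -
  define c where "c = (\<Sum>b\<in>UNIV. p b * v b)"
  have d0: "0 \<le> d" using v[of undefined] by simp
  have "(\<Sum>a\<in>UNIV. p a * \<bar>v a - c\<bar>)\<^sup>2 \<le> (\<Sum>a\<in>UNIV. p a * (v a - c)\<^sup>2)"
    using prob_vec_mean_sq_le[OF p, of "\<lambda>a. \<bar>v a - c\<bar>"] by simp
  also have "\<dots> = (\<Sum>a\<in>UNIV. p a * (v a)\<^sup>2) - 2 * c * c + c\<^sup>2 * (\<Sum>a\<in>UNIV. p a)"
    by (simp add: power2_diff algebra_simps sum.distrib sum_subtractf c_def
        sum_distrib_left sum_distrib_right)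
  also have "\<dots> \<le> (\<Sum>a\<in>UNIV. p a * (v a)\<^sup>2)"
    using p by (simp add: prob_vec_def power2_eq_square)
  also have "\<dots> \<le> d\<^sup>2"
    using prob_vec_mean_le[OF p, of "\<lambda>a. (v a)\<^sup>2" "d\<^sup>2"] v d0
    by (simp add: abs_le_square_iff[symmetric])
  finally show ?thesis
    using d0 by (simp add: c_def power2_le_iff_abs_le)
qed

subsection \<open>Softmax and the entropy-regularised objective\<close>

definition softmax :: "('a::finite \<Rightarrow> real) \<Rightarrow> 'a \<Rightarrow> real" where
  "softmax x a = exp (x a) / (\<Sum>b\<in>UNIV. exp (x b))"

lemma softmax_pos: "0 < softmax x a"
  unfolding softmax_def by (intro divide_pos_pos) (auto intro!: sum_pos)

lemma prob_vec_softmax: "prob_vec (softmax x)"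
proof -
  have "0 < (\<Sum>b\<in>UNIV. exp (x b))" by (auto intro!: sum_pos)
  then show ?thesis
    unfolding prob_vec_def using softmax_pos less_imp_le
    by (auto simp: softmax_def simp flip: sum_divide_distrib)
qed

lemma ln_softmax: "ln (softmax x a) = x a - ln (\<Sum>b\<in>UNIV. exp (x b))"
proof -
  have "0 < (\<Sum>b\<in>UNIV. exp (x b))" by (auto intro!: sum_pos)
  then show ?thesis unfolding softmax_def by (simp add: ln_div)
qed

lemma has_real_derivative_softmax_line:
  fixes x v :: "'a::finite \<Rightarrow> real"
  shows "((\<lambda>t. softmax (\<lambda>b. x b + t * v b) a) has_real_derivative
     softmax (\<lambda>b. x b + t * v b) a * (v a - (\<Sum>b\<in>UNIV. softmax (\<lambda>b. x b + t * v b) b * v b))) (at t)"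
proof -
  define E where "E b t = exp (x b + t * v b)" for b t
  define Z where "Z t = (\<Sum>b\<in>UNIV. E b t)" for t
  have Z_pos: "0 < Z t" for t unfolding Z_def E_def by (auto intro!: sum_pos)
  have softmax_E: "softmax (\<lambda>b. x b + t * v b) c = E c t / Z t" for c t
    unfolding softmax_def Z_def E_def ..
  have dE: "(E b has_real_derivative E b t * v b) (at t)" for b
    unfolding E_def by (auto intro!: derivative_eq_intros)
  have dZ: "(Z has_real_derivative (\<Sum>b\<in>UNIV. E b t * v b)) (at t)"
    unfolding Z_def by (intro DERIV_sum dE)
  have "((\<lambda>t. E a t / Z t) has_real_derivative
      (E a t * v a * Z t - (\<Sum>b\<in>UNIV. E b t * v b) * E a t) / (Z t * Z t)) (at t)"
    using DERIV_divide[OF dE dZ] Z_pos[of t] by (simp add: algebra_simps)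
  moreover have "(E a t * v a * Z t - (\<Sum>b\<in>UNIV. E b t * v b) * E a t) / (Z t * Z t)
      = E a t / Z t * (v a - (\<Sum>b\<in>UNIV. E b t / Z t * v b))"
  proof -
    have "(\<Sum>b\<in>UNIV. E b t / Z t * v b) = (\<Sum>b\<in>UNIV. E b t * v b) / Z t"
      by (simp add: sum_divide_distrib)
    then show ?thesis using Z_pos[of t] by (simp add: field_simps)
  qed
  ultimately show ?thesis by (simp add: softmax_E)
qed

lemma softmax_l1_dist_le:
  fixes x y :: "'a::finite \<Rightarrow> real"
  assumes xy: "\<And>a. \<bar>x a - y a\<bar> \<le> d"
  shows "(\<Sum>a\<in>UNIV. \<bar>softmax x a - softmax y a\<bar>) \<le> d"
proof -
  define v where "v b = y b - x b" for b
  define sg where "sg a = sgn (softmax y a - softmax x a)" for a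
  define p where "p t = softmax (\<lambda>b. x b + t * v b)" for t
  define h where "h t = (\<Sum>a\<in>UNIV. sg a * p t a)" for t
  define h' where "h' t = (\<Sum>a\<in>UNIV. sg a * (p t a * (v a - (\<Sum>b\<in>UNIV. p t b * v b))))" for t
  have "(h has_real_derivative h' t) (at t)" for t
    unfolding h_def h'_def p_def by (intro DERIV_sum DERIV_cmult has_real_derivative_softmax_line)
  then obtain z where z: "h 1 - h 0 = h' z" using MVT2[of 0 1 h h'] by auto
  have "p 1 = softmax y" "p 0 = softmax x" unfolding p_def v_def by auto
  then have "h 1 - h 0 = (\<Sum>a\<in>UNIV. sg a * (softmax y a - softmax x a))"
    unfolding h_def by (simp add: sum_subtractf right_diff_distrib)
  also have "\<dots> = (\<Sum>a\<in>UNIV. \<bar>softmax x a - softmax y a\<bar>)"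
    unfolding sg_def by (simp add: abs_sgn[symmetric] mult.commute abs_minus_commute)
  finally have l1_eq: "(\<Sum>a\<in>UNIV. \<bar>softmax x a - softmax y a\<bar>) = h' z"
    using z by simp
  have "h' z \<le> (\<Sum>a\<in>UNIV. p z a * \<bar>v a - (\<Sum>b\<in>UNIV. p z b * v b)\<bar>)"
    unfolding h'_def
  proof (rule sum_mono)
    fix a
    let ?X = "p z a * (v a - (\<Sum>b\<in>UNIV. p z b * v b))"
    have "sg a * ?X \<le> \<bar>sg a\<bar> * \<bar>?X\<bar>" by (metis abs_ge_self abs_mult)
    also have "\<dots> \<le> \<bar>?X\<bar>"
      unfolding sg_def by (intro mult_left_le_one_le) (auto simp: abs_sgn_eq)
    finally show "sg a * ?X \<le> p z a * \<bar>v a - (\<Sum>b\<in>UNIV. p z b * v b)\<bar>"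
      by (simp add: abs_mult less_imp_le[OF softmax_pos] p_def)
  qed
  also have "\<dots> \<le> d"
    unfolding p_def
    by (rule prob_vec_mean_abs_deviation_le[OF prob_vec_softmax])
       (simp add: v_def abs_minus_commute xy)
  finally show ?thesis using l1_eq by simp
qed

definition reg_value :: "real \<Rightarrow> ('a::finite \<Rightarrow> real) \<Rightarrow> ('a \<Rightarrow> real) \<Rightarrow> real" where
  "reg_value tau Q w = (\<Sum>a\<in>UNIV. w a * (Q a - tau * ln (w a)))"

definition rel_entropy :: "('a::finite \<Rightarrow> real) \<Rightarrow> ('a \<Rightarrow> real) \<Rightarrow> real" where
  "rel_entropy w g = (\<Sum>a\<in>UNIV. w a * ln (w a / g a))"

lemma diff_le_mult_ln_div:
  fixes x y :: real
  assumes "0 \<le> x" "0 < y"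
  shows "x - y \<le> x * ln (x / y)" and "x * ln (x / y) = x - y \<Longrightarrow> x = y"
proof -
  consider "x = 0" | "0 < x" using assms(1) by linarith
  then have "x - y \<le> x * ln (x / y) \<and> (x * ln (x / y) = x - y \<longrightarrow> x = y)"
  proof cases
    case 2
    have yx: "0 < y / x" using 2 assms(2) by simp
    have ln_inv: "ln (x / y) = - ln (y / x)" using 2 assms(2) by (simp add: ln_div)
    have "x * (1 - y / x) \<le> x * ln (x / y)"
      using ln_le_minus_one[OF yx] 2 unfolding ln_inv by (intro mult_left_mono) auto
    moreover have "x * ln (x / y) = x - y \<Longrightarrow> x = y"
      using ln_eq_minus_one[OF yx] 2 unfolding ln_inv by (auto simp: field_simps)
    ultimately show ?thesis using 2 by (simp add: right_diff_distrib)
  qed (use assms in auto)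
  then show "x - y \<le> x * ln (x / y)" and "x * ln (x / y) = x - y \<Longrightarrow> x = y" by auto
qed

lemma rel_entropy_nonneg:
  assumes "prob_vec w" "prob_vec g" "\<And>a. 0 < g a"
  shows "0 \<le> rel_entropy w g"
proof -
  have "0 = (\<Sum>a\<in>UNIV. w a - g a)"
    using assms(1,2) by (simp add: sum_subtractf prob_vec_def)
  also have "\<dots> \<le> rel_entropy w g"
    unfolding rel_entropy_def
    by (intro sum_mono diff_le_mult_ln_div(1) prob_vec_nonneg[OF assms(1)] assms(3))
  finally show ?thesis .
qed

lemma rel_entropy_eq_0_imp_eq:
  assumes "prob_vec w" "prob_vec g" "\<And>a. 0 < g a" and "rel_entropy w g = 0"
  shows "w = g"
proof
  fix a
  define gap where "gap b = w b * ln (w b / g b) - (w b - g b)" for b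
  have gap_nonneg: "0 \<le> gap b" for b
    using diff_le_mult_ln_div(1)[OF prob_vec_nonneg[OF assms(1)] assms(3)] by (simp add: gap_def)
  have "(\<Sum>b\<in>UNIV. gap b) = rel_entropy w g - ((\<Sum>b\<in>UNIV. w b) - (\<Sum>b\<in>UNIV. g b))"
    by (simp add: gap_def rel_entropy_def sum_subtractf)
  also have "\<dots> = 0" using assms(1,2,4) by (simp add: prob_vec_def)
  finally have "gap a = 0" using gap_nonneg by (simp add: sum_nonneg_eq_0_iff)
  then show "w a = g a"
    using diff_le_mult_ln_div(2)[OF prob_vec_nonneg[OF assms(1)] assms(3)] by (simp add: gap_def)
qed

lemma reg_value_eq_log_partition_minus_rel_entropy:
  assumes w: "prob_vec w" and tau: "tau \<noteq> 0"
  shows "reg_value tau Q w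
    = tau * ln (\<Sum>b\<in>UNIV. exp (Q b / tau)) - tau * rel_entropy w (softmax (\<lambda>b. Q b / tau))"
proof -
  define L where "L = ln (\<Sum>b\<in>UNIV. exp (Q b / tau))"
  have summand: "w a * (Q a - tau * ln (w a))
      = w a * (tau * L) - tau * (w a * ln (w a / softmax (\<lambda>b. Q b / tau) a))" for a
  proof (cases "w a = 0")
    case False
    then have "0 < w a" using prob_vec_nonneg[OF w, of a] by simp
    then have "ln (w a / softmax (\<lambda>b. Q b / tau) a) = ln (w a) - (Q a / tau - L)"
      using softmax_pos[of "\<lambda>b. Q b / tau" a] by (simp add: ln_div ln_softmax L_def)
    then show ?thesis using tau by (simp add: right_diff_distrib)
  qed simp
  show ?thesis
    unfolding reg_value_def rel_entropy_def summand
    by (simp add: sum_subtractf prob_vec_sum_mult_const[OF w] L_def sum_distrib_left)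
qed

lemma reg_value_maximizer_eq_softmax:
  assumes tau: "0 < tau" and u: "prob_vec u"
    and max: "\<And>w. prob_vec w \<Longrightarrow> reg_value tau Q w \<le> reg_value tau Q u"
  shows "u = softmax (\<lambda>b. Q b / tau)"
proof -
  let ?g = "softmax (\<lambda>b. Q b / tau)"
  have "rel_entropy ?g ?g = 0" by (simp add: rel_entropy_def less_imp_neq[OF softmax_pos, symmetric])
  then have "tau * rel_entropy u ?g \<le> 0"
    using max[OF prob_vec_softmax[of "\<lambda>b. Q b / tau"]]
    by (simp add: reg_value_eq_log_partition_minus_rel_entropy u prob_vec_softmax
        less_imp_neq[OF tau, symmetric])
  then have "rel_entropy u ?g = 0"
    using tau rel_entropy_nonneg[OF u prob_vec_softmax[of "\<lambda>b. Q b / tau"] softmax_pos]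
    by (simp add: mult_le_0_iff)
  then show ?thesis by (rule rel_entropy_eq_0_imp_eq[OF u prob_vec_softmax softmax_pos])
qed

lemma reg_value_diff: "reg_value tau Q w - reg_value tau Q' w = (\<Sum>a\<in>UNIV. w a * (Q a - Q' a))"
  unfolding reg_value_def by (simp add: sum_subtractf algebra_simps)

lemma max_reg_value_dist_le:
  assumes u: "prob_vec u" and u': "prob_vec u'"
    and max: "\<And>w. prob_vec w \<Longrightarrow> reg_value tau Q w \<le> reg_value tau Q u"
    and max': "\<And>w. prob_vec w \<Longrightarrow> reg_value tau Q' w \<le> reg_value tau Q' u'"
    and d: "\<And>a. \<bar>Q a - Q' a\<bar> \<le> d"
  shows "\<bar>reg_value tau Q u - reg_value tau Q' u'\<bar> \<le> d"
proof -
  have "reg_value tau Q u - reg_value tau Q' u' \<le> reg_value tau Q u - reg_value tau Q' u"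
    using max'[OF u] by simp
  also have "\<dots> \<le> d"
    unfolding reg_value_diff using d by (intro prob_vec_mean_le[OF u]) (simp add: abs_le_iff)
  finally have "reg_value tau Q u - reg_value tau Q' u' \<le> d" .
  moreover have "reg_value tau Q' u' - reg_value tau Q u \<le> reg_value tau Q' u' - reg_value tau Q u'"
    using max[OF u'] by simp
  moreover have "\<dots> \<le> d"
    unfolding reg_value_diff using d by (intro prob_vec_mean_le[OF u']) (simp add: abs_le_iff)
  ultimately show ?thesis by linarith
qed

subsection \<open>The Markov chain induced by a policy\<close>

lemma prob_vec_P_pi:
  assumes "is_kernel P" "is_policy p"
  shows "prob_vec (P_pi P p s)"
proof -
  have "(\<Sum>s'\<in>UNIV. P_pi P p s s') = (\<Sum>a\<in>UNIV. p s a * (\<Sum>s'\<in>UNIV. P s a s'))"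
    unfolding P_pi_def sum_distrib_left by (rule sum.swap)
  with assms show ?thesis
    unfolding prob_vec_def P_pi_def is_kernel_def is_policy_def by (auto intro!: sum_nonneg)
qed

lemma prob_vec_state_dist:
  assumes "is_kernel P" "is_policy p"
  shows "prob_vec (state_dist P p n s)"
proof (induction n)
  case 0
  show ?case by (simp add: prob_vec_def)
next
  case (Suc n)
  have "(\<Sum>s'\<in>UNIV. state_dist P p (Suc n) s s')
      = (\<Sum>u\<in>UNIV. state_dist P p n s u * (\<Sum>s'\<in>UNIV. P_pi P p u s'))"
    unfolding state_dist.simps sum_distrib_left by (rule sum.swap)
  with Suc prob_vec_P_pi[OF assms] show ?case
    by (auto simp: prob_vec_def intro!: sum_nonneg)
qed

lemma state_dist_Suc_left:
  "state_dist P p (Suc n) s s' = (\<Sum>u\<in>UNIV. P_pi P p s u * state_dist P p n u s')"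
proof (induction n arbitrary: s')
  case 0
  show ?case by (simp add: of_bool_def[symmetric])
next
  case (Suc n)
  have "state_dist P p (Suc (Suc n)) s s'
      = (\<Sum>s''\<in>UNIV. (\<Sum>u\<in>UNIV. P_pi P p s u * state_dist P p n u s'') * P_pi P p s'' s')"
    by (simp only: state_dist.simps(2)[of P p "Suc n"] Suc)
  also have "\<dots> = (\<Sum>u\<in>UNIV. P_pi P p s u * (\<Sum>s''\<in>UNIV. state_dist P p n u s'' * P_pi P p s'' s'))"
    unfolding sum_distrib_left sum_distrib_right mult.assoc by (rule sum.swap)
  finally show ?case by simp
qed

text \<open>Evaluating the hypothesis at a minimiser of \<open>D\<close> shows \<open>min D \<ge> 0\<close>.\<close>
lemma discounted_supersolution_ge:
  fixes D e :: "'s::finite \<Rightarrow> real" and M :: "'s \<Rightarrow> 's \<Rightarrow> real"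
  assumes M: "\<And>s. prob_vec (M s)" and g0: "0 \<le> gamma" and g1: "gamma < 1"
    and e0: "\<And>s. 0 \<le> e s" and De: "\<And>s. e s + gamma * (\<Sum>s'\<in>UNIV. M s s' * D s') \<le> D s"
  shows "e s \<le> D s"
proof -
  define mu where "mu = Min (range D)"
  have mu_le_MD: "mu \<le> (\<Sum>s'\<in>UNIV. M s s' * D s')" for s
  proof -
    have "mu = (\<Sum>s'\<in>UNIV. M s s' * mu)" by (simp add: prob_vec_sum_mult_const[OF M])
    also have "\<dots> \<le> (\<Sum>s'\<in>UNIV. M s s' * D s')"
      by (intro sum_mono mult_left_mono prob_vec_nonneg[OF M]) (simp add: mu_def)
    finally show ?thesis .
  qed
  have "mu \<in> range D" unfolding mu_def by (rule Min_in) auto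
  then obtain s0 where s0: "D s0 = mu" by auto
  have "gamma * mu \<le> mu"
    using De[of s0] e0[of s0] mult_left_mono[OF mu_le_MD[of s0] g0] s0 by linarith
  then have "0 \<le> (1 - gamma) * mu" by (simp add: algebra_simps)
  then have "0 \<le> mu" using g1 by (simp add: zero_le_mult_iff)
  then show ?thesis
    using De[of s] mult_nonneg_nonneg[OF g0 order_trans[OF _ mu_le_MD[of s]]] by fastforce
qed

subsection \<open>The soft Bellman equation\<close>

lemma V_reg_sums:
  assumes K: "is_kernel P" and pol: "is_policy p" and g0: "0 \<le> gamma" and g1: "gamma < 1"
  shows "(\<lambda>t. gamma ^ t * (\<Sum>s'\<in>UNIV. state_dist P p t s s' * reg_reward m r lam tau p s'))
           sums V_reg P gamma m r tau lam p s"
proof -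
  define B where "B = Max (range (\<lambda>s'. \<bar>reg_reward m r lam tau p s'\<bar>))"
  have "summable (\<lambda>t. gamma ^ t * B)"
    using g0 g1 by (intro summable_mult2 summable_geometric) simp
  moreover have "norm (gamma ^ t * (\<Sum>s'\<in>UNIV. state_dist P p t s s' * reg_reward m r lam tau p s'))
      \<le> gamma ^ t * B" for t
    using prob_vec_abs_mean_le[OF prob_vec_state_dist[OF K pol], of "reg_reward m r lam tau p" B]
    using g0 by (simp add: B_def abs_mult mult_left_mono)
  ultimately have "summable (\<lambda>t. gamma ^ t * (\<Sum>s'\<in>UNIV. state_dist P p t s s' * reg_reward m r lam tau p s'))"
    by (rule summable_comparison_test'[where N=0])
  then show ?thesis unfolding V_reg_def by (rule summable_sums)
qed

lemma V_reg_bellman: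
  assumes K: "is_kernel P" and pol: "is_policy p" and g0: "0 \<le> gamma" and g1: "gamma < 1"
  shows "V_reg P gamma m r tau lam p s = reg_reward m r lam tau p s
     + gamma * (\<Sum>u\<in>UNIV. P_pi P p s u * V_reg P gamma m r tau lam p u)"
proof -
  let ?g = "reg_reward m r lam tau p" and ?V = "V_reg P gamma m r tau lam p"
  define f where "f u t = gamma ^ t * (\<Sum>s'\<in>UNIV. state_dist P p t u s' * ?g s')" for u t
  have f_sums: "f u sums ?V u" for u unfolding f_def by (rule V_reg_sums[OF assms])
  have f_Suc: "f s (Suc t) = gamma * (\<Sum>u\<in>UNIV. P_pi P p s u * f u t)" for t
  proof -
    have "(\<Sum>s'\<in>UNIV. (\<Sum>u\<in>UNIV. P_pi P p s u * state_dist P p t u s') * ?g s')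
        = (\<Sum>u\<in>UNIV. P_pi P p s u * (\<Sum>s'\<in>UNIV. state_dist P p t u s' * ?g s'))"
      unfolding sum_distrib_left sum_distrib_right mult.assoc by (rule sum.swap)
    then show ?thesis
      unfolding f_def state_dist_Suc_left by (simp add: sum_distrib_left mult_ac)
  qed
  have "(\<lambda>t. f s (Suc t)) sums (gamma * (\<Sum>u\<in>UNIV. P_pi P p s u * ?V u))"
    unfolding f_Suc by (intro sums_mult sums_sum f_sums)
  then have "f s sums (gamma * (\<Sum>u\<in>UNIV. P_pi P p s u * ?V u) + f s 0)"
    by (simp add: sums_Suc_iff)
  moreover have "f s 0 = ?g s" unfolding f_def by (simp add: of_bool_def[symmetric])
  ultimately show ?thesis using sums_unique2[OF f_sums] by simp
qed

definition soft_Q :: "('s \<Rightarrow> 'a \<Rightarrow> 's::finite \<Rightarrow> real) \<Rightarrow> real \<Rightarrow> nat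
    \<Rightarrow> (nat \<Rightarrow> 's \<Rightarrow> 'a \<Rightarrow> real) \<Rightarrow> (nat \<Rightarrow> real) \<Rightarrow> ('s \<Rightarrow> real) \<Rightarrow> 's \<Rightarrow> 'a \<Rightarrow> real" where
  "soft_Q P gamma m r lam V s a = r_lam m r lam s a + gamma * (\<Sum>u\<in>UNIV. P s a u * V u)"

lemma one_step_eq_reg_value_soft_Q:
  "reg_reward m r lam tau q s + gamma * (\<Sum>u\<in>UNIV. P_pi P q s u * V u)
   = reg_value tau (soft_Q P gamma m r lam V s) (q s)"
proof -
  have "(\<Sum>u\<in>UNIV. P_pi P q s u * V u) = (\<Sum>a\<in>UNIV. q s a * (\<Sum>u\<in>UNIV. P s a u * V u))"
    unfolding P_pi_def sum_distrib_left sum_distrib_right mult.assoc by (rule sum.swap)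
  then show ?thesis
    unfolding reg_reward_def reg_value_def soft_Q_def
    by (simp add: sum_distrib_left sum.distrib[symmetric] algebra_simps)
qed

lemma V_reg_eq_reg_value:
  assumes "is_kernel P" "is_policy p" "0 \<le> gamma" "gamma < 1"
  shows "V_reg P gamma m r tau lam p s
    = reg_value tau (soft_Q P gamma m r lam (V_reg P gamma m r tau lam p) s) (p s)"
  unfolding one_step_eq_reg_value_soft_Q[symmetric] by (rule V_reg_bellman[OF assms])

text \<open>An optimal policy is greedy with respect to its own soft Q-function: otherwise switching
  to the better distribution at a single state would, by the comparison principle, strictly
  improve the value there.\<close>
lemma opt_reg_policy_greedy:
  assumes K: "is_kernel P" and g0: "0 \<le> gamma" and g1: "gamma < 1"
    and opt: "is_opt_reg_policy P gamma m r tau lam p" and w: "prob_vec w"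
  defines "Q \<equiv> soft_Q P gamma m r lam (V_reg P gamma m r tau lam p)"
  shows "reg_value tau (Q s) w \<le> reg_value tau (Q s) (p s)"
proof (rule ccontr)
  assume gain: "\<not> ?thesis"
  let ?V = "V_reg P gamma m r tau lam p"
  define q where "q = p(s := w)"
  have pol: "is_policy p" using opt unfolding is_opt_reg_policy_def by simp
  then have qpol: "is_policy q" using w unfolding q_def is_policy_iff_prob_vec by simp
  let ?W = "V_reg P gamma m r tau lam q"
  define e where "e s' = reg_value tau (Q s') (q s') - ?V s'" for s'
  have V_fix: "?V s' = reg_value tau (Q s') (p s')" for s'
    unfolding Q_def by (rule V_reg_eq_reg_value[OF K pol g0 g1])
  have e_nonneg: "0 \<le> e s'" for s'
    using gain by (cases "s' = s") (auto simp: e_def q_def V_fix)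
  have "e s' + gamma * (\<Sum>u\<in>UNIV. P_pi P q s' u * (?W u - ?V u)) \<le> ?W s' - ?V s'" for s'
    using V_reg_bellman[OF K qpol g0 g1, of m r tau lam s']
      one_step_eq_reg_value_soft_Q[of m r lam tau q s' gamma P ?V]
    by (simp add: e_def Q_def sum_subtractf right_diff_distrib)
  then have "e s \<le> ?W s - ?V s"
    by (rule discounted_supersolution_ge[OF prob_vec_P_pi[OF K qpol] g0 g1 e_nonneg])
  moreover have "?W s \<le> ?V s" using opt qpol unfolding is_opt_reg_policy_def by blast
  ultimately show False using gain by (simp add: e_def q_def V_fix)
qed

lemma opt_reg_policy_eq_softmax:
  assumes "is_kernel P" "0 \<le> gamma" "gamma < 1" "0 < tau"
    and opt: "is_opt_reg_policy P gamma m r tau lam p"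
  shows "p s = softmax (\<lambda>a. soft_Q P gamma m r lam (V_reg P gamma m r tau lam p) s a / tau)"
  using opt opt_reg_policy_greedy[OF assms(1-3) opt]
  by (intro reg_value_maximizer_eq_softmax[OF assms(4)])
     (auto simp: is_opt_reg_policy_def is_policy_iff_prob_vec)

subsection \<open>Sensitivity of the soft Q-function to the reward weights\<close>

lemma r_lam_dist_le:
  assumes pos: "\<And>i s a. i \<le> m \<Longrightarrow> 0 < r i s a"
  shows "\<bar>r_lam m r lam s a - r_lam m r lam' s a\<bar> \<le> R_max m r * lam_dist2 m lam lam'"
proof -
  have "\<bar>r_lam m r lam s a - r_lam m r lam' s a\<bar> = \<bar>\<Sum>i=1..m. (lam i - lam' i) * r i s a\<bar>"
    unfolding r_lam_def by (simp add: sum_subtractf left_diff_distrib)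
  also have "\<dots> \<le> (\<Sum>i=1..m. \<bar>lam i - lam' i\<bar> * \<bar>r_max r i\<bar>)"
  proof (rule order_trans[OF sum_abs sum_mono])
    fix i assume "i \<in> {1..m}"
    have "r i s a \<le> r_max r i"
      unfolding r_max_def by (rule Max_ge) (auto intro: image_eqI[where x="(s, a)"])
    with \<open>i \<in> {1..m}\<close> have "\<bar>r i s a\<bar> \<le> \<bar>r_max r i\<bar>"
      using pos[of i s a] by simp
    then show "\<bar>(lam i - lam' i) * r i s a\<bar> \<le> \<bar>lam i - lam' i\<bar> * \<bar>r_max r i\<bar>"
      by (simp add: abs_mult mult_left_mono)
  qed
  also have "\<dots> \<le> L2_set (\<lambda>i. lam i - lam' i) {1..m} * L2_set (r_max r) {1..m}"
    by (rule L2_set_mult_ineq)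
  also have "\<dots> = R_max m r * lam_dist2 m lam lam'"
    unfolding L2_set_def R_max_def lam_dist2_def by simp
  finally show ?thesis .
qed

lemma opt_soft_Q_dist_le:
  assumes K: "is_kernel P" and g0: "0 \<le> gamma" and g1: "gamma < 1"
    and pos: "\<And>i s a. i \<le> m \<Longrightarrow> 0 < r i s a"
    and opt1: "is_opt_reg_policy P gamma m r tau lam pi1"
    and opt2: "is_opt_reg_policy P gamma m r tau lam' pi2"
  defines "Q1 \<equiv> soft_Q P gamma m r lam (V_reg P gamma m r tau lam pi1)"
    and "Q2 \<equiv> soft_Q P gamma m r lam' (V_reg P gamma m r tau lam' pi2)"
  shows "\<bar>Q1 s a - Q2 s a\<bar> \<le> R_max m r * lam_dist2 m lam lam' / (1 - gamma)"
proof -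
  define D where "D = Max (range (\<lambda>(s, a). \<bar>Q1 s a - Q2 s a\<bar>))"
  have D: "\<bar>Q1 s a - Q2 s a\<bar> \<le> D" for s a
    unfolding D_def by (rule Max_ge) (auto intro: image_eqI[where x="(s, a)"])
  have pol: "is_policy pi1" "is_policy pi2"
    using opt1 opt2 unfolding is_opt_reg_policy_def by auto
  have V1: "V_reg P gamma m r tau lam pi1 u = reg_value tau (Q1 u) (pi1 u)" for u
    unfolding Q1_def by (rule V_reg_eq_reg_value[OF K pol(1) g0 g1])
  have V2: "V_reg P gamma m r tau lam' pi2 u = reg_value tau (Q2 u) (pi2 u)" for u
    unfolding Q2_def by (rule V_reg_eq_reg_value[OF K pol(2) g0 g1])
  have V_dist: "\<bar>V_reg P gamma m r tau lam pi1 u - V_reg P gamma m r tau lam' pi2 u\<bar> \<le> D" for u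
    unfolding V1 V2
    using pol D opt_reg_policy_greedy[OF K g0 g1 opt1] opt_reg_policy_greedy[OF K g0 g1 opt2]
    by (intro max_reg_value_dist_le) (auto simp: is_policy_iff_prob_vec Q1_def Q2_def)
  have "\<bar>Q1 s a - Q2 s a\<bar> \<le> R_max m r * lam_dist2 m lam lam' + gamma * D" for s a
  proof -
    let ?dr = "r_lam m r lam s a - r_lam m r lam' s a"
    let ?dV = "\<Sum>u\<in>UNIV. P s a u * (V_reg P gamma m r tau lam pi1 u - V_reg P gamma m r tau lam' pi2 u)"
    have "Q1 s a - Q2 s a = ?dr + gamma * ?dV"
      unfolding Q1_def Q2_def soft_Q_def by (simp add: sum_subtractf right_diff_distrib)
    then have "\<bar>Q1 s a - Q2 s a\<bar> \<le> \<bar>?dr\<bar> + gamma * \<bar>?dV\<bar>"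
      using abs_triangle_ineq[of ?dr "gamma * ?dV"] g0 by (simp add: abs_mult)
    also have "\<dots> \<le> R_max m r * lam_dist2 m lam lam' + gamma * D"
      using K V_dist g0 r_lam_dist_le[OF pos]
      by (intro add_mono mult_left_mono prob_vec_abs_mean_le) (auto simp: is_kernel_iff_prob_vec)
    finally show ?thesis .
  qed
  then have "D \<le> R_max m r * lam_dist2 m lam lam' + gamma * D"
    unfolding D_def by (subst Max_le_iff) auto
  then have "D \<le> R_max m r * lam_dist2 m lam lam' / (1 - gamma)"
    using g1 by (simp add: field_simps)
  then show ?thesis using D[of s a] by linarith
qed

theorem lemma5:
  fixes P :: "'s::finite \<Rightarrow> 'a::finite \<Rightarrow> 's \<Rightarrow> real"
    and r :: "nat \<Rightarrow> 's \<Rightarrow> 'a \<Rightarrow> real"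
    and m :: nat and gamma tau :: real
    and lam lam' :: "nat \<Rightarrow> real"
    and pi1 pi2 :: "'s \<Rightarrow> 'a \<Rightarrow> real"
  assumes "is_kernel P"
    and "0 < gamma" and "gamma < 1"
    and "\<And>i s a. i \<le> m \<Longrightarrow> 0 < r i s a"
    and "0 < tau"
    and "\<And>i. i \<in> {1..m} \<Longrightarrow> 0 \<le> lam i"
    and "\<And>i. i \<in> {1..m} \<Longrightarrow> 0 \<le> lam' i"
    and "is_opt_reg_policy P gamma m r tau lam pi1"
    and "is_opt_reg_policy P gamma m r tau lam' pi2"
  shows "Max (range (\<lambda>s. \<Sum>a\<in>UNIV. \<bar>pi1 s a - pi2 s a\<bar>))
           \<le> R_max m r / ((1 - gamma) * tau) * lam_dist2 m lam lam'"
proof -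
  note K = assms(1) and g0 = less_imp_le[OF assms(2)] and g1 = assms(3) and tau = assms(5)
  define Q1 where "Q1 = soft_Q P gamma m r lam (V_reg P gamma m r tau lam pi1)"
  define Q2 where "Q2 = soft_Q P gamma m r lam' (V_reg P gamma m r tau lam' pi2)"
  have pi1: "pi1 s = softmax (\<lambda>a. Q1 s a / tau)" for s
    unfolding Q1_def by (rule opt_reg_policy_eq_softmax[OF K g0 g1 tau assms(8)])
  have pi2: "pi2 s = softmax (\<lambda>a. Q2 s a / tau)" for s
    unfolding Q2_def by (rule opt_reg_policy_eq_softmax[OF K g0 g1 tau assms(9)])
  have "(\<Sum>a\<in>UNIV. \<bar>pi1 s a - pi2 s a\<bar>) \<le> R_max m r / ((1 - gamma) * tau) * lam_dist2 m lam lam'"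
    for s
    unfolding pi1 pi2
  proof (rule softmax_l1_dist_le)
    fix a
    have "\<bar>Q1 s a - Q2 s a\<bar> \<le> R_max m r * lam_dist2 m lam lam' / (1 - gamma)"
      unfolding Q1_def Q2_def by (rule opt_soft_Q_dist_le[OF K g0 g1 assms(4,8,9)])
    then have "\<bar>Q1 s a - Q2 s a\<bar> / tau \<le> R_max m r * lam_dist2 m lam lam' / (1 - gamma) / tau"
      using tau by (intro divide_right_mono) simp_all
    then show "\<bar>Q1 s a / tau - Q2 s a / tau\<bar> \<le> R_max m r / ((1 - gamma) * tau) * lam_dist2 m lam lam'"
      using tau by (simp add: diff_divide_distrib[symmetric])
  qed
  then show ?thesis by (subst Max_le_iff) auto
qed

end
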